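(* Let $k>0$, $\theta>0$, and let $X_1,\dots,X_n$ be i.i.d. Gamma random variables with shape parameter $k$ and scale parameter $\theta$. Let $\widehat{\boldsymbol\theta}=\frac{1}{kn}\sum_{i=1}^nX_i$. Let $\varepsilon>0$ and $0<\delta<1$, and define $$\zeta=2C_{\mathrm{BE}}\Big(3+\frac6k\Big)^{3/4}\sqrt{\frac{k[\varepsilon-\ln(1+\varepsilon)]}{\ln\frac1\delta}}.$$ Then $\Pr\{|\widehat{\boldsymbol\theta}-\theta|<\varepsilon\theta\}>1-\delta$ provided that $$n>\frac{\ln\frac{1+\zeta}{\delta}}{k[\varepsilon-\ln(1+\varepsilon)]}.$$
   Context: $C_{\mathrm{BE}}$ denotes the absolute constant in the Berry–Esseen inequality: for i.i.d. $Y_1,Y_2,\dots$ distributed as $Y$ with $\mathbb{E}[Y]=0$, $\mathbb{E}[Y^2]>0$, $\mathbb{E}[|Y|^3]<\infty$, the cdf $F_n$ of $\sum_{i=1}^nY_i/\sqrt{n\mathbb{E}[Y^2]}$ satisfies $|F_n(y)-\Phi(y)|\le\frac{C_{\mathrm{BE}}}{\sqrt n}\frac{\mathbb{E}[|Y|^3]}{\mathbb{E}^{3/2}[Y^2]}$ for all $y,n$, where $\Phi$ is the standard normal cdf. *)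

theory Defs
  imports "HOL-Probability.Probability"
begin

fun conv_pow :: "real measure \<Rightarrow> nat \<Rightarrow> real measure" where
  "conv_pow \<mu> 0 = return borel 0"
| "conv_pow \<mu> (Suc n) = convolution \<mu> (conv_pow \<mu> n)"

definition Phi :: "real \<Rightarrow> real" where
  "Phi y = measure (density lborel std_normal_density) {..y}"

definition BE_constant :: "real \<Rightarrow> bool" where
  "BE_constant C \<longleftrightarrow>
    (\<forall>\<mu> :: real measure.
       prob_space \<mu> \<and> sets \<mu> = sets borel \<and> integrable \<mu> (\<lambda>x. \<bar>x\<bar> ^ 3) \<and>
       (\<integral>x. x \<partial>\<mu>) = 0 \<and> (\<integral>x. x ^ 2 \<partial>\<mu>) > 0 \<longrightarrow>
       (\<forall>n::nat. n \<ge> 1 \<longrightarrow> (\<forall>y::real.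
          \<bar>measure (conv_pow \<mu> n) {.. y * sqrt (real n * (\<integral>x. x ^ 2 \<partial>\<mu>))} - Phi y\<bar>
            \<le> C / sqrt (real n) * ((\<integral>x. \<bar>x\<bar> ^ 3 \<partial>\<mu>) / (\<integral>x. x ^ 2 \<partial>\<mu>) powr (3/2)))))"

definition gamma_density :: "real \<Rightarrow> real \<Rightarrow> real \<Rightarrow> real" where
  "gamma_density k \<theta> x =
     (if x > 0 then x powr (k - 1) * exp (- x / \<theta>) / (Gamma k * \<theta> powr k) else 0)"

end

theory Submission
  imports Defs
begin

text \<open>
  Chernoff's bound by exponential tilting, with the probability under the tilted law estimated
  by Berry--Esseen instead of by 1. Rescaling \<open>\<theta>\<close> to \<open>\<theta>' = r \<theta>\<close> multiplies the Gamma density by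
  \<open>r^(-k) exp ((1/\<theta> - 1/\<theta>') x)\<close>, so the law of \<open>S = X\<^sub>1 + \<dots> + X\<^sub>n\<close> under \<open>\<theta>'\<close> has density
  \<open>r^(-k n) exp ((1/\<theta> - 1/\<theta>') s)\<close> with respect to its law under \<open>\<theta>\<close>. Beyond the mean \<open>n k \<theta>'\<close>
  of the tilted sum this density is at least \<open>exp (n k (r - 1 - ln r))\<close>. For \<open>r = 1 + \<epsilon>\<close> this gives
  \<open>Pr[\<theta>] {S \<ge> n k \<theta>'} \<le> exp (- n k (\<epsilon> - ln (1 + \<epsilon>))) Pr[\<theta>'] {S \<ge> n k \<theta>'}\<close>, and the lower tail
  (\<open>r = 1 - \<epsilon>\<close>) has an even larger exponent. Berry--Esseen at the mean bounds each tilted probability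
  by \<open>1/2 + C \<rho> / \<surd>n\<close>, where \<open>\<rho> = E|Y|\<^sup>3 / \<sigma>\<^sup>3 \<le> \<surd>(E Y\<^sup>4) / \<sigma>\<^sup>2 = \<surd>(3 + 6/k)\<close> for the centred
  Gamma law. The hypothesis on \<open>n\<close> makes the two tails together smaller than \<open>\<delta>\<close>.
\<close>


section \<open>Convolution powers\<close>

lemma sets_conv_pow [simp, measurable_cong]: "sets (conv_pow \<mu> n) = sets borel"
  by (cases n) auto

lemma space_conv_pow [simp]: "space (conv_pow \<mu> n) = UNIV"
  by (cases n) auto

lemma prob_space_conv_pow:
  assumes "prob_space \<mu>" "sets \<mu> = sets borel"
  shows "prob_space (conv_pow \<mu> n)"
proof (induction n)
  case 0
  show ?case by (simp add: prob_space_return)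
next
  case (Suc n)
  interpret \<mu>: prob_space \<mu> by fact
  interpret \<mu>n: prob_space "conv_pow \<mu> n" by (fact Suc)
  interpret pair_prob_space \<mu> "conv_pow \<mu> n" ..
  have "prob_space (distr (\<mu> \<Otimes>\<^sub>M conv_pow \<mu> n) borel (\<lambda>(x, y). x + y))"
    by (rule prob_space_distr) (use assms in simp)
  then show ?case by (simp add: convolution_def)
qed

lemma nn_integral_conv_pow_Suc:
  assumes "prob_space \<mu>" "sets \<mu> = sets borel" "f \<in> borel_measurable borel"
  shows "(\<integral>\<^sup>+x. f x \<partial>conv_pow \<mu> (Suc n)) = (\<integral>\<^sup>+x. \<integral>\<^sup>+y. f (x + y) \<partial>conv_pow \<mu> n \<partial>\<mu>)"
  using assms prob_space_conv_pow[OF assms(1,2), of n]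
  by (simp add: nn_integral_convolution prob_space.finite_measure)

lemma nn_integral_conv_pow_tilt:
  assumes \<mu>: "prob_space \<mu>" "sets \<mu> = sets borel" and \<nu>: "prob_space \<nu>" "sets \<nu> = sets borel"
    and "a \<ge> 0"
    and tilt: "\<And>g. g \<in> borel_measurable borel \<Longrightarrow>
        (\<integral>\<^sup>+x. g x \<partial>\<nu>) = (\<integral>\<^sup>+x. g x * ennreal (a * exp (l * x)) \<partial>\<mu>)"
    and f: "f \<in> borel_measurable borel"
  shows "(\<integral>\<^sup>+x. f x \<partial>conv_pow \<nu> n) = (\<integral>\<^sup>+x. f x * ennreal (a ^ n * exp (l * x)) \<partial>conv_pow \<mu> n)"
  using f
proof (induction n arbitrary: f)
  case 0
  then show ?case by (simp add: nn_integral_return)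
next
  case (Suc n)
  note [measurable] = Suc.prems
  interpret \<mu>n: prob_space "conv_pow \<mu> n" by (rule prob_space_conv_pow[OF \<mu>])
  let ?E = "\<lambda>n x. ennreal (a ^ n * exp (l * x))"
  have factor: "?E n y * ennreal (a * exp (l * x)) = ?E (Suc n) (x + y)" for x y
    using \<open>a \<ge> 0\<close> by (simp add: ennreal_mult'[symmetric] exp_add[symmetric] algebra_simps)
  have "(\<integral>\<^sup>+x. f x \<partial>conv_pow \<nu> (Suc n)) = (\<integral>\<^sup>+x. \<integral>\<^sup>+y. f (x + y) \<partial>conv_pow \<nu> n \<partial>\<nu>)"
    by (rule nn_integral_conv_pow_Suc[OF \<nu>]) measurable
  also have "\<dots> = (\<integral>\<^sup>+x. \<integral>\<^sup>+y. f (x + y) * ?E n y \<partial>conv_pow \<mu> n \<partial>\<nu>)"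
    by (intro nn_integral_cong Suc.IH) measurable
  also have "\<dots> = (\<integral>\<^sup>+x. (\<integral>\<^sup>+y. f (x + y) * ?E n y \<partial>conv_pow \<mu> n) * ennreal (a * exp (l * x)) \<partial>\<mu>)"
    by (rule tilt, rule \<mu>n.borel_measurable_nn_integral) measurable
  also have "\<dots> = (\<integral>\<^sup>+x. \<integral>\<^sup>+y. f (x + y) * ?E (Suc n) (x + y) \<partial>conv_pow \<mu> n \<partial>\<mu>)"
    by (intro nn_integral_cong, subst nn_integral_multc[symmetric])
       (simp_all add: mult.assoc factor)
  also have "\<dots> = (\<integral>\<^sup>+x. f x * ?E (Suc n) x \<partial>conv_pow \<mu> (Suc n))"
    by (rule nn_integral_conv_pow_Suc[symmetric, OF \<mu>]) measurable
  finally show ?case .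
qed

lemma measure_conv_pow_tilt_ge:
  assumes \<mu>: "prob_space \<mu>" "sets \<mu> = sets borel" and \<nu>: "prob_space \<nu>" "sets \<nu> = sets borel"
    and "a \<ge> 0"
    and tilt: "\<And>g. g \<in> borel_measurable borel \<Longrightarrow>
        (\<integral>\<^sup>+x. g x \<partial>\<nu>) = (\<integral>\<^sup>+x. g x * ennreal (a * exp (l * x)) \<partial>\<mu>)"
    and A: "A \<in> sets borel" and "b \<ge> 0" and b: "\<And>x. x \<in> A \<Longrightarrow> b \<le> a ^ n * exp (l * x)"
  shows "b * measure (conv_pow \<mu> n) A \<le> measure (conv_pow \<nu> n) A"
proof -
  interpret \<mu>n: prob_space "conv_pow \<mu> n" by (rule prob_space_conv_pow[OF \<mu>])
  interpret \<nu>n: prob_space "conv_pow \<nu> n" by (rule prob_space_conv_pow[OF \<nu>])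
  have "ennreal b * emeasure (conv_pow \<mu> n) A = (\<integral>\<^sup>+x. ennreal b * indicator A x \<partial>conv_pow \<mu> n)"
    using A by (simp add: nn_integral_cmult_indicator)
  also have "\<dots> \<le> (\<integral>\<^sup>+x. indicator A x * ennreal (a ^ n * exp (l * x)) \<partial>conv_pow \<mu> n)"
    by (intro nn_integral_mono) (auto simp: b intro!: ennreal_leI split: split_indicator)
  also have "\<dots> = emeasure (conv_pow \<nu> n) A"
    using nn_integral_conv_pow_tilt[OF \<mu> \<nu> \<open>a \<ge> 0\<close> tilt, of "indicator A" n] A by simp
  finally show ?thesis
    using \<open>b \<ge> 0\<close> by (simp add: \<mu>n.emeasure_eq_measure \<nu>n.emeasure_eq_measure ennreal_mult'[symmetric])
qed

lemma nn_integral_conv_pow_shift: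
  assumes \<mu>: "prob_space \<mu>" "sets \<mu> = sets borel" and f: "f \<in> borel_measurable borel"
  shows "(\<integral>\<^sup>+x. f x \<partial>conv_pow (distr \<mu> borel (\<lambda>x. x - m)) n)
       = (\<integral>\<^sup>+x. f (x - real n * m) \<partial>conv_pow \<mu> n)"
  using f
proof (induction n arbitrary: f)
  case 0
  then show ?case by (simp add: nn_integral_return)
next
  case (Suc n)
  note [measurable] = Suc.prems
  have [measurable_cong]: "sets \<mu> = sets borel" by fact
  let ?\<mu>' = "distr \<mu> borel (\<lambda>x. x - m)"
  interpret \<mu>: prob_space \<mu> by fact
  interpret \<mu>n: prob_space "conv_pow \<mu> n" by (rule prob_space_conv_pow[OF \<mu>])
  have \<mu>': "prob_space ?\<mu>'" by (rule \<mu>.prob_space_distr) simp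
  have "(\<integral>\<^sup>+x. f x \<partial>conv_pow ?\<mu>' (Suc n)) = (\<integral>\<^sup>+x. \<integral>\<^sup>+y. f (x + y) \<partial>conv_pow ?\<mu>' n \<partial>?\<mu>')"
    by (rule nn_integral_conv_pow_Suc[OF \<mu>']) simp_all
  also have "\<dots> = (\<integral>\<^sup>+x. \<integral>\<^sup>+y. f (x + (y - real n * m)) \<partial>conv_pow \<mu> n \<partial>?\<mu>')"
    by (intro nn_integral_cong Suc.IH) measurable
  also have "\<dots> = (\<integral>\<^sup>+x. \<integral>\<^sup>+y. f (x + y - real (Suc n) * m) \<partial>conv_pow \<mu> n \<partial>\<mu>)"
    by (subst nn_integral_distr) (simp_all add: algebra_simps)
  also have "\<dots> = (\<integral>\<^sup>+x. f (x - real (Suc n) * m) \<partial>conv_pow \<mu> (Suc n))"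
    by (rule nn_integral_conv_pow_Suc[symmetric, OF \<mu>]) measurable
  finally show ?case .
qed

lemma measure_conv_pow_shift_atMost:
  assumes "prob_space \<mu>" "sets \<mu> = sets borel"
  shows "measure (conv_pow (distr \<mu> borel (\<lambda>x. x - m)) n) {..t} = measure (conv_pow \<mu> n) {..t + real n * m}"
proof -
  have "emeasure (conv_pow (distr \<mu> borel (\<lambda>x. x - m)) n) {..t}
      = (\<integral>\<^sup>+x. indicator {..t} (x - real n * m) \<partial>conv_pow \<mu> n)"
    using nn_integral_conv_pow_shift[OF assms, of "indicator {..t}" m n] by simp
  also have "\<dots> = (\<integral>\<^sup>+x. indicator {..t + real n * m} x \<partial>conv_pow \<mu> n)"
    by (intro nn_integral_cong) (simp split: split_indicator)
  also have "\<dots> = emeasure (conv_pow \<mu> n) {..t + real n * m}" by simp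
  finally show ?thesis by (simp add: measure_def)
qed

lemma emeasure_conv_pow_singleton:
  assumes \<mu>: "prob_space \<mu>" "sets \<mu> = sets borel" and atomless: "\<And>t. emeasure \<mu> {t} = 0"
  shows "emeasure (conv_pow \<mu> (Suc n)) {t} = 0"
proof -
  interpret \<mu>n: prob_space "conv_pow \<mu> n" by (rule prob_space_conv_pow[OF \<mu>])
  have fin: "finite_measure \<mu>" "finite_measure (conv_pow \<mu> n)"
    using \<mu> by (auto intro: prob_space.finite_measure \<mu>n.finite_measure)
  have "conv_pow \<mu> (Suc n) = convolution (conv_pow \<mu> n) \<mu>"
    using convolution_commutative[OF fin] \<mu> by simp
  then have "emeasure (conv_pow \<mu> (Suc n)) {t} = (\<integral>\<^sup>+x. \<integral>\<^sup>+y. indicator {t} (x + y) \<partial>\<mu> \<partial>conv_pow \<mu> n)"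
    using convolution_emeasure'[of "{t}" "conv_pow \<mu> n" \<mu>] fin \<mu> by simp
  also have "\<dots> = (\<integral>\<^sup>+x. \<integral>\<^sup>+y. indicator {t - x} y \<partial>\<mu> \<partial>conv_pow \<mu> n)"
    by (intro nn_integral_cong) (auto split: split_indicator)
  also have "\<dots> = 0" using atomless \<mu> by simp
  finally show ?thesis .
qed

lemma AE_conv_pow_pos:
  assumes \<mu>: "prob_space \<mu>" "sets \<mu> = sets borel" and pos: "AE x in \<mu>. 0 < x"
  shows "AE x in conv_pow \<mu> (Suc n). 0 < x"
proof -
  have step: "AE x in conv_pow \<mu> (Suc n). 0 < x" if nonneg: "AE y in conv_pow \<mu> n. 0 \<le> y" for n
  proof -
    have "emeasure (conv_pow \<mu> (Suc n)) {..0} = (\<integral>\<^sup>+x. \<integral>\<^sup>+y. indicator {..0} (x + y) \<partial>conv_pow \<mu> n \<partial>\<mu>)"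
      using nn_integral_conv_pow_Suc[OF \<mu>, of "indicator {..0}" n] by simp
    also have "\<dots> = (\<integral>\<^sup>+x. 0 \<partial>\<mu>)"
    proof (rule nn_integral_cong_AE)
      show "AE x in \<mu>. (\<integral>\<^sup>+y. indicator {..0} (x + y) \<partial>conv_pow \<mu> n) = 0"
        using pos
      proof eventually_elim
        case (elim x)
        show ?case
          by (rule nn_integral_0_iff_AE[THEN iffD2], simp)
             (use nonneg elim in \<open>auto elim!: eventually_mono simp: indicator_def\<close>)
      qed
    qed
    finally show ?thesis by (intro AE_I[of _ _ "{..0}"]) auto
  qed
  show ?thesis
  proof (induction n)
    case 0
    show ?case by (rule step) (subst conv_pow.simps, subst AE_return, auto)
  next
    case (Suc n)
    show ?case by (rule step) (use Suc.IH in \<open>auto elim: eventually_mono\<close>)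
  qed
qed

lemma (in prob_space) distr_sum_indep_eq_conv_pow:
  assumes indep: "indep_vars (\<lambda>_. borel) X {0..<n}"
    and law: "\<And>i. i < n \<Longrightarrow> distr M borel (X i) = \<mu>"
  shows "distr M borel (\<lambda>\<omega>. \<Sum>i<n. X i \<omega>) = conv_pow \<mu> n"
  using assms
proof (induction n)
  case 0
  then show ?case by (simp add: distr_const)
next
  case (Suc n)
  have rv: "random_variable borel (X i)" if "i < Suc n" for i
    using Suc.prems(1) that unfolding indep_vars_def by auto
  have "indep_vars (\<lambda>_. borel) X {0..<n}"
    by (rule indep_vars_subset[OF Suc.prems(1)]) auto
  then have IH: "distr M borel (\<lambda>\<omega>. \<Sum>i<n. X i \<omega>) = conv_pow \<mu> n"
    using Suc.IH Suc.prems(2) by auto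
  have "indep_var borel (X n) borel (\<lambda>\<omega>. \<Sum>i\<in>{0..<n}. X i \<omega>)"
    by (rule indep_vars_sum) (use Suc.prems(1) in \<open>auto simp: atLeast0_lessThan_Suc\<close>)
  then have "distr M borel (\<lambda>\<omega>. X n \<omega> + (\<Sum>i<n. X i \<omega>))
      = convolution (distr M borel (X n)) (distr M borel (\<lambda>\<omega>. \<Sum>i<n. X i \<omega>))"
    by (intro sum_indep_random_variable) (use rv in \<open>auto simp: atLeast0LessThan\<close>)
  then show ?case using IH Suc.prems(2)[of n] by (simp add: add.commute)
qed

section \<open>Berry--Esseen at the mean\<close>

lemma Phi_zero: "Phi 0 = 1 / 2"
proof -
  let ?N = "density lborel std_normal_density"
  interpret N: prob_space ?N by (rule prob_space_normal_density) simp
  let ?f = "\<lambda>x. ennreal (std_normal_density x)"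
  have "emeasure ?N {..0} = (\<integral>\<^sup>+x. ?f x * indicator {..0} x \<partial>lborel)"
    by (simp add: emeasure_density)
  also have "\<dots> = (\<integral>\<^sup>+x. ?f (- x) * indicator {..0} (- x) \<partial>lborel)"
    using nn_integral_real_affine[of "\<lambda>x. ?f x * indicator {..0} x" "-1" 0] by simp
  also have "\<dots> = (\<integral>\<^sup>+x. ?f x * indicator {0..} x \<partial>lborel)"
    by (intro nn_integral_cong) (auto simp: std_normal_density_def split: split_indicator)
  also have "\<dots> = emeasure ?N {0..}" by (simp add: emeasure_density)
  finally have symmetric: "N.prob {..0} = N.prob {0..}" by (simp add: measure_def)
  have "AE x in lborel. x \<in> {0} \<longrightarrow> ennreal (std_normal_density x) = 0"
    using AE_lborel_singleton[of 0] by (rule eventually_mono) simp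
  then have "{0} \<in> null_sets ?N" by (subst null_sets_density_iff) auto
  moreover have "{0..} - {0} = {0::real<..}" by auto
  ultimately have no_atom: "N.prob {0..} = N.prob {0<..}"
    using measure_Diff_null_set[of "{0..}" ?N "{0}"] by simp
  have "{..0} \<union> {0<..} = (UNIV :: real set)" "{..0} \<inter> {0<..} = ({} :: real set)" by auto
  then have "N.prob {..0} + N.prob {0<..} = 1"
    using N.finite_measure_Union[of "{..0}" "{0<..}"] N.prob_space by simp
  then show ?thesis using symmetric no_atom by (simp add: Phi_def)
qed

lemma BE_constant_nonneg:
  assumes "BE_constant C"
  shows "C \<ge> 0"
proof -
  \<comment> \<open>For the Rademacher law the Berry--Esseen bound with \<open>n = 1\<close> reads \<open>\<bar>\<dots>\<bar> \<le> C\<close>.\<close>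
  define \<mu> where "\<mu> = distr (measure_pmf (pmf_of_set {-1, 1::real})) borel (\<lambda>x. x)"
  have sets_\<mu>: "sets \<mu> = sets borel" by (simp add: \<mu>_def)
  have "prob_space \<mu>"
    unfolding \<mu>_def by (rule prob_space.prob_space_distr) (auto intro: measure_pmf.prob_space_axioms)
  have integral_\<mu>: "integrable \<mu> f" "integral\<^sup>L \<mu> f = (f (-1) + f 1) / 2"
    if [measurable]: "f \<in> borel_measurable borel" for f :: "real \<Rightarrow> real"
    unfolding \<mu>_def
    by (simp_all add: integrable_distr_eq integral_distr integrable_measure_pmf_finite integral_pmf_of_set)
  have "integrable \<mu> (\<lambda>x. \<bar>x\<bar> ^ 3)" "(\<integral>x. x \<partial>\<mu>) = 0" "(\<integral>x. x ^ 2 \<partial>\<mu>) = 1" "(\<integral>x. \<bar>x\<bar> ^ 3 \<partial>\<mu>) = 1"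
    by (simp_all add: integral_\<mu>)
  moreover from this have "\<bar>measure (conv_pow \<mu> 1) {.. 0 * sqrt (real 1 * (\<integral>x. x ^ 2 \<partial>\<mu>))} - Phi 0\<bar>
      \<le> C / sqrt (real 1) * ((\<integral>x. \<bar>x\<bar> ^ 3 \<partial>\<mu>) / (\<integral>x. x ^ 2 \<partial>\<mu>) powr (3/2))"
    using assms \<open>prob_space \<mu>\<close> sets_\<mu> unfolding BE_constant_def by (metis zero_less_one order_refl)
  ultimately show ?thesis by simp
qed

lemma integral_abs_cube_le:
  fixes \<mu> :: "real measure"
  assumes [measurable_cong]: "sets \<mu> = sets borel"
    and int2: "integrable \<mu> (\<lambda>x. x ^ 2)" and int4: "integrable \<mu> (\<lambda>x. x ^ 4)"
    and pos: "(\<integral>x. x ^ 2 \<partial>\<mu>) > 0"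
  shows "integrable \<mu> (\<lambda>x. \<bar>x\<bar> ^ 3)"
    and "(\<integral>x. \<bar>x\<bar> ^ 3 \<partial>\<mu>) \<le> sqrt ((\<integral>x. x ^ 2 \<partial>\<mu>) * (\<integral>x. x ^ 4 \<partial>\<mu>))"
proof -
  define v where "v = (\<integral>x. x ^ 2 \<partial>\<mu>)"
  define w where "w = (\<integral>x. x ^ 4 \<partial>\<mu>)"
  have "w > 0"
  proof (rule ccontr)
    assume "\<not> w > 0"
    moreover have "w \<ge> 0" unfolding w_def by simp
    ultimately have "w = 0" by simp
    then have "AE x in \<mu>. x = 0"
      using integral_nonneg_eq_0_iff_AE[OF int4] w_def by simp
    then have "AE x in \<mu>. x ^ 2 = 0" by (rule eventually_mono) simp
    then have "v = 0" unfolding v_def by (rule integral_eq_zero_AE)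
    then show False using pos v_def by simp
  qed
  define a where "a = sqrt (w / v)"
  have "a > 0" using \<open>w > 0\<close> pos by (simp add: a_def v_def)
  \<comment> \<open>AM-GM with weights chosen so that both terms integrate to \<open>sqrt (v * w)\<close>\<close>
  have am_gm: "\<bar>x\<bar> ^ 3 \<le> (a * x ^ 2 + x ^ 4 / a) / 2" for x
  proof -
    have "0 \<le> x ^ 2 * (\<bar>x\<bar> - a) ^ 2" by simp
    also have "\<dots> = x ^ 4 - 2 * a * \<bar>x\<bar> ^ 3 + a ^ 2 * x ^ 2"
      by (simp add: power2_eq_square power3_eq_cube power4_eq_xxxx algebra_simps abs_mult_self_eq)
    finally show ?thesis using \<open>a > 0\<close> by (simp add: field_simps power2_eq_square)
  qed
  have bound: "integrable \<mu> (\<lambda>x. (a * x ^ 2 + x ^ 4 / a) / 2)" using int2 int4 by simp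
  show int3: "integrable \<mu> (\<lambda>x. \<bar>x\<bar> ^ 3)"
    by (rule Bochner_Integration.integrable_bound[OF bound], simp, rule AE_I2)
       (use am_gm in \<open>auto intro: order_trans[OF _ abs_ge_self]\<close>)
  have "(\<integral>x. \<bar>x\<bar> ^ 3 \<partial>\<mu>) \<le> (\<integral>x. (a * x ^ 2 + x ^ 4 / a) / 2 \<partial>\<mu>)"
    by (rule integral_mono[OF int3 bound am_gm])
  also have "\<dots> = (a * v + w / a) / 2" using int2 int4 by (simp add: v_def w_def)
  also have "\<dots> = sqrt (v * w)"
    using \<open>w > 0\<close> pos by (simp add: a_def v_def real_sqrt_divide real_sqrt_mult field_simps)
  finally show "(\<integral>x. \<bar>x\<bar> ^ 3 \<partial>\<mu>) \<le> sqrt ((\<integral>x. x ^ 2 \<partial>\<mu>) * (\<integral>x. x ^ 4 \<partial>\<mu>))"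
    by (simp add: v_def w_def)
qed

lemma BE_constant_atMost_mean:
  assumes BE: "BE_constant C" and \<mu>: "prob_space \<mu>" "sets \<mu> = sets borel"
    and mean: "has_bochner_integral \<mu> (\<lambda>x. x - m) 0"
    and var: "has_bochner_integral \<mu> (\<lambda>x. (x - m) ^ 2) v" "v > 0"
    and fourth: "has_bochner_integral \<mu> (\<lambda>x. (x - m) ^ 4) w"
    and "n \<ge> 1"
  shows "\<bar>measure (conv_pow \<mu> n) {..real n * m} - 1 / 2\<bar> \<le> C / sqrt n * (sqrt w / v)"
proof -
  define \<nu> where "\<nu> = distr \<mu> borel (\<lambda>x. x - m)"
  interpret \<mu>: prob_space \<mu> by fact
  have [measurable_cong]: "sets \<mu> = sets borel" by fact
  have "prob_space \<nu>" unfolding \<nu>_def by (rule \<mu>.prob_space_distr) simp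
  have centered: "has_bochner_integral \<nu> f c" if "has_bochner_integral \<mu> (\<lambda>x. f (x - m)) c"
    and [measurable]: "f \<in> borel_measurable borel" for f :: "real \<Rightarrow> real" and c
    unfolding \<nu>_def by (rule has_bochner_integral_distr) (use that in simp_all)
  have moments: "has_bochner_integral \<nu> (\<lambda>x. x) 0" "has_bochner_integral \<nu> (\<lambda>x. x ^ 2) v"
    "has_bochner_integral \<nu> (\<lambda>x. x ^ 4) w"
    by (rule centered, use mean var fourth in simp, simp)+
  define T where "T = (\<integral>x. \<bar>x\<bar> ^ 3 \<partial>\<nu>)"
  have "sets \<nu> = sets borel" "(\<integral>x. x \<partial>\<nu>) = 0" "(\<integral>x. x ^ 2 \<partial>\<nu>) = v"
    using moments by (simp_all add: \<nu>_def has_bochner_integral_iff)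
  moreover have int3: "integrable \<nu> (\<lambda>x. \<bar>x\<bar> ^ 3)" and "T \<le> sqrt (v * w)"
    using integral_abs_cube_le[of \<nu>, OF \<open>sets \<nu> = sets borel\<close>] moments(2,3) var(2)
    unfolding has_bochner_integral_iff T_def by auto
  ultimately have "\<bar>measure (conv_pow \<nu> n) {.. 0 * sqrt (real n * (\<integral>x. x ^ 2 \<partial>\<nu>))} - Phi 0\<bar>
      \<le> C / sqrt (real n) * (T / (\<integral>x. x ^ 2 \<partial>\<nu>) powr (3/2))"
    using BE \<open>prob_space \<nu>\<close> int3 var(2) \<open>n \<ge> 1\<close> unfolding BE_constant_def T_def by metis
  then have "\<bar>measure (conv_pow \<mu> n) {..real n * m} - 1 / 2\<bar> \<le> C / sqrt n * (T / v powr (3/2))"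
    using moments measure_conv_pow_shift_atMost[OF \<mu>, of m n 0]
    by (simp add: \<nu>_def Phi_zero has_bochner_integral_iff)
  also have "\<dots> \<le> C / sqrt n * (sqrt (v * w) / v powr (3/2))"
    using \<open>T \<le> sqrt (v * w)\<close> var(2) BE_constant_nonneg[OF BE]
    by (intro mult_left_mono divide_right_mono) auto
  also have "sqrt (v * w) / v powr (3/2) = sqrt w / v"
    using var(2) by (simp add: real_sqrt_mult powr_half_sqrt[symmetric] powr_mult_base field_simps)
  finally show ?thesis .
qed

section \<open>The Gamma distribution\<close>

lemma gamma_density_nonneg: "k > 0 \<Longrightarrow> \<theta> > 0 \<Longrightarrow> gamma_density k \<theta> x \<ge> 0"
  by (auto simp: gamma_density_def intro!: divide_nonneg_pos Gamma_real_pos)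

lemma borel_measurable_gamma_density [measurable]: "gamma_density k \<theta> \<in> borel_measurable borel"
  unfolding gamma_density_def by measurable

lemma nn_integral_gamma_density_power:
  assumes "k > 0" "\<theta> > 0"
  shows "(\<integral>\<^sup>+x. ennreal (gamma_density k \<theta> x * x ^ j) \<partial>lborel) = ennreal (\<theta> ^ j * pochhammer k j)"
proof -
  have "Gamma k > 0" using assms by (simp add: Gamma_real_pos)
  \<comment> \<open>the substitution \<open>x = \<theta> t\<close> turns the integral into Euler's integral for \<open>Gamma (k + j)\<close>\<close>
  have substitution: "\<theta> * (gamma_density k \<theta> (\<theta> * t) * (\<theta> * t) ^ j)
      = \<theta> ^ j / Gamma k * (indicator {0..} t * t powr (k + real j - 1) / exp t)" for t
  proof (cases "t > 0")
    case True
    have "(\<theta> * t) powr (k - 1) = \<theta> powr (k - 1) * t powr (k - 1)"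
      and "\<theta> powr k = \<theta> * \<theta> powr (k - 1)"
      and "t powr (k + real j - 1) = t ^ j * t powr (k - 1)"
      using assms True powr_add[of \<theta> 1 "k - 1"] powr_add[of t "real j" "k - 1"]
      by (simp_all add: powr_mult powr_realpow algebra_simps)
    then show ?thesis
      using assms True \<open>Gamma k > 0\<close>
      by (simp add: gamma_density_def power_mult_distrib field_simps exp_minus)
  next
    case False
    then show ?thesis using assms
      by (cases "t = 0") (auto simp: gamma_density_def zero_less_mult_iff)
  qed
  have "(\<integral>\<^sup>+x. ennreal (gamma_density k \<theta> x * x ^ j) \<partial>lborel)
      = ennreal \<theta> * (\<integral>\<^sup>+t. ennreal (gamma_density k \<theta> (\<theta> * t) * (\<theta> * t) ^ j) \<partial>lborel)"
    using nn_integral_real_affine[of "\<lambda>x. ennreal (gamma_density k \<theta> x * x ^ j)" \<theta> 0] assms by simp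
  also have "\<dots> = (\<integral>\<^sup>+t. ennreal (\<theta> ^ j / Gamma k)
                     * ennreal (indicator {0..} t * t powr (k + real j - 1) / exp t) \<partial>lborel)"
    using assms \<open>Gamma k > 0\<close>
    by (subst nn_integral_cmult[symmetric])
       (auto intro!: nn_integral_cong simp: substitution ennreal_mult'[symmetric] ennreal_mult[symmetric])
  also have "\<dots> = ennreal (\<theta> ^ j / Gamma k) * ennreal (Gamma (k + real j))"
    using assms by (subst nn_integral_cmult) (auto simp: Gamma_conv_nn_integral_real)
  also have "\<dots> = ennreal (\<theta> ^ j * pochhammer k j)"
    using assms \<open>Gamma k > 0\<close>
    by (simp add: pochhammer_Gamma nonpos_Ints_def ennreal_mult'[symmetric] less_imp_le)
  finally show ?thesis .
qed

definition gamma_law :: "real \<Rightarrow> real \<Rightarrow> real measure" where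
  "gamma_law k \<theta> = density lborel (gamma_density k \<theta>)"

lemma sets_gamma_law [simp, measurable_cong]: "sets (gamma_law k \<theta>) = sets borel"
  by (simp add: gamma_law_def)

lemma has_bochner_integral_gamma_law_power:
  assumes "k > 0" "\<theta> > 0"
  shows "has_bochner_integral (gamma_law k \<theta>) (\<lambda>x. x ^ j) (\<theta> ^ j * pochhammer k j)"
  unfolding gamma_law_def
proof (rule has_bochner_integral_density)
  have "0 \<le> gamma_density k \<theta> x * x ^ j" for x
    using assms by (cases "x > 0") (auto simp: gamma_density_def intro!: gamma_density_nonneg)
  then show "has_bochner_integral lborel (\<lambda>x. gamma_density k \<theta> x *\<^sub>R x ^ j) (\<theta> ^ j * pochhammer k j)"
    using nn_integral_gamma_density_power[OF assms, of j] assms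
    by (simp add: has_bochner_integral_iff nn_integral_eq_integrable pochhammer_nonneg)
qed (use gamma_density_nonneg assms in auto)

lemma prob_space_gamma_law:
  assumes "k > 0" "\<theta> > 0"
  shows "prob_space (gamma_law k \<theta>)"
proof (rule prob_spaceI)
  show "emeasure (gamma_law k \<theta>) (space (gamma_law k \<theta>)) = 1"
    using nn_integral_gamma_density_power[OF assms, of 0] by (simp add: gamma_law_def emeasure_density)
qed

lemma gamma_law_central_moments:
  assumes "k > 0" "\<theta> > 0"
  shows "has_bochner_integral (gamma_law k \<theta>) (\<lambda>x. x - k * \<theta>) 0"
    and "has_bochner_integral (gamma_law k \<theta>) (\<lambda>x. (x - k * \<theta>) ^ 2) (k * \<theta> ^ 2)"
    and "has_bochner_integral (gamma_law k \<theta>) (\<lambda>x. (x - k * \<theta>) ^ 4) ((3 * k ^ 2 + 6 * k) * \<theta> ^ 4)"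
proof -
  have moment: "has_bochner_integral (gamma_law k \<theta>) (\<lambda>x. x ^ j) (\<theta> ^ j * pochhammer k j)" for j
    by (rule has_bochner_integral_gamma_law_power[OF assms])
  let ?m = "k * \<theta>"
  have "has_bochner_integral (gamma_law k \<theta>) (\<lambda>x. x ^ 1 - ?m * x ^ 0) (\<theta> ^ 1 * pochhammer k 1 - ?m * (\<theta> ^ 0 * pochhammer k 0))"
    by (intro has_bochner_integral_diff has_bochner_integral_mult_right moment)
  then show "has_bochner_integral (gamma_law k \<theta>) (\<lambda>x. x - ?m) 0"
    by (simp add: mult.commute)
  have "has_bochner_integral (gamma_law k \<theta>) (\<lambda>x. x ^ 2 - 2 * ?m * x ^ 1 + ?m ^ 2 * x ^ 0)
      (\<theta> ^ 2 * pochhammer k 2 - 2 * ?m * (\<theta> ^ 1 * pochhammer k 1) + ?m ^ 2 * (\<theta> ^ 0 * pochhammer k 0))"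
    by (intro has_bochner_integral_diff has_bochner_integral_add has_bochner_integral_mult_right moment)
  then show "has_bochner_integral (gamma_law k \<theta>) (\<lambda>x. (x - ?m) ^ 2) (k * \<theta> ^ 2)"
    by (rule has_bochner_integral_cong[THEN iffD1, rotated -1])
       (simp_all add: pochhammer_Suc_prod eval_nat_numeral algebra_simps)
  have "has_bochner_integral (gamma_law k \<theta>)
      (\<lambda>x. x ^ 4 - 4 * ?m * x ^ 3 + 6 * ?m ^ 2 * x ^ 2 - 4 * ?m ^ 3 * x ^ 1 + ?m ^ 4 * x ^ 0)
      (\<theta> ^ 4 * pochhammer k 4 - 4 * ?m * (\<theta> ^ 3 * pochhammer k 3) + 6 * ?m ^ 2 * (\<theta> ^ 2 * pochhammer k 2)
        - 4 * ?m ^ 3 * (\<theta> ^ 1 * pochhammer k 1) + ?m ^ 4 * (\<theta> ^ 0 * pochhammer k 0))"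
    by (intro has_bochner_integral_diff has_bochner_integral_add has_bochner_integral_mult_right moment)
  then show "has_bochner_integral (gamma_law k \<theta>) (\<lambda>x. (x - ?m) ^ 4) ((3 * k ^ 2 + 6 * k) * \<theta> ^ 4)"
    by (rule has_bochner_integral_cong[THEN iffD1, rotated -1])
       (simp_all add: pochhammer_Suc_prod eval_nat_numeral algebra_simps)
qed

lemma emeasure_gamma_law_singleton [simp]: "emeasure (gamma_law k \<theta>) {t} = 0"
proof -
  have "AE x in lborel. x \<in> {t} \<longrightarrow> ennreal (gamma_density k \<theta> x) = 0"
    using AE_lborel_singleton[of t] by (rule eventually_mono) simp
  then have "{t} \<in> null_sets (gamma_law k \<theta>)"
    unfolding gamma_law_def by (subst null_sets_density_iff) auto
  then show ?thesis by auto
qed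

lemma AE_gamma_law_pos: "AE x in gamma_law k \<theta>. 0 < x"
  unfolding gamma_law_def by (subst AE_density) (auto simp: gamma_density_def)

lemma nn_integral_gamma_law_rescale:
  assumes "k > 0" "\<theta> > 0" "\<theta>' > 0" and g: "g \<in> borel_measurable borel"
  shows "(\<integral>\<^sup>+x. g x \<partial>gamma_law k \<theta>') =
     (\<integral>\<^sup>+x. g x * ennreal ((\<theta> / \<theta>') powr k * exp ((1 / \<theta> - 1 / \<theta>') * x)) \<partial>gamma_law k \<theta>)"
proof -
  have "gamma_density k \<theta>' x = gamma_density k \<theta> x * ((\<theta> / \<theta>') powr k * exp ((1 / \<theta> - 1 / \<theta>') * x))" for x
  proof (cases "x > 0")
    case True
    have "- x / \<theta> + (1 / \<theta> - 1 / \<theta>') * x = - x / \<theta>'" using assms by (simp add: field_simps)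
    then have "exp (- x / \<theta>) * exp ((1 / \<theta> - 1 / \<theta>') * x) = exp (- x / \<theta>')"
      by (simp add: exp_add[symmetric])
    then show ?thesis
      using True assms by (simp add: gamma_density_def powr_divide field_simps)
  qed (simp add: gamma_density_def)
  then have "(\<integral>\<^sup>+x. ennreal (gamma_density k \<theta>' x) * g x \<partial>lborel)
      = (\<integral>\<^sup>+x. ennreal (gamma_density k \<theta> x) * (g x * ennreal ((\<theta> / \<theta>') powr k * exp ((1 / \<theta> - 1 / \<theta>') * x))) \<partial>lborel)"
    using gamma_density_nonneg[OF assms(1,2)]
    by (intro nn_integral_cong) (simp add: ennreal_mult mult_ac)
  then show ?thesis
    unfolding gamma_law_def using g by (simp add: nn_integral_density)
qed

section \<open>Tails of Gamma sums\<close>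

lemma gamma_sum_atMost_mean:
  assumes BE: "BE_constant C" and "k > 0" "\<theta> > 0" "n \<ge> 1"
  shows "\<bar>measure (conv_pow (gamma_law k \<theta>) n) {..real n * (k * \<theta>)} - 1 / 2\<bar>
           \<le> C / sqrt n * sqrt (3 + 6 / k)"
proof -
  note moments = gamma_law_central_moments[OF assms(2,3)]
  have "k * \<theta> ^ 2 > 0" using assms by simp
  have "(3 * k ^ 2 + 6 * k) * \<theta> ^ 4 = (k * \<theta> ^ 2) ^ 2 * (3 + 6 / k)"
    using assms by (simp add: field_simps power2_eq_square power4_eq_xxxx)
  then have "sqrt ((3 * k ^ 2 + 6 * k) * \<theta> ^ 4) / (k * \<theta> ^ 2) = sqrt (3 + 6 / k)"
    using assms by (simp add: real_sqrt_mult)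
  with BE_constant_atMost_mean[OF BE prob_space_gamma_law[OF assms(2,3)] sets_gamma_law
      moments(1,2) \<open>k * \<theta> ^ 2 > 0\<close> moments(3) \<open>n \<ge> 1\<close>]
  show ?thesis by simp
qed

lemma gamma_sum_atLeast_mean:
  assumes BE: "BE_constant C" and "k > 0" "\<theta> > 0" "n \<ge> 1"
  shows "measure (conv_pow (gamma_law k \<theta>) n) {real n * (k * \<theta>)..} \<le> 1 / 2 + C / sqrt n * sqrt (3 + 6 / k)"
proof -
  let ?D = "conv_pow (gamma_law k \<theta>) n" and ?t = "real n * (k * \<theta>)"
  interpret D: prob_space ?D by (rule prob_space_conv_pow[OF prob_space_gamma_law[OF assms(2,3)]]) simp
  obtain m where "n = Suc m" using \<open>n \<ge> 1\<close> by (cases n) auto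
  then have "emeasure ?D {?t} = 0"
    using emeasure_conv_pow_singleton[OF prob_space_gamma_law[OF assms(2,3)]] by (simp del: conv_pow.simps)
  then have "{?t} \<in> null_sets ?D" by (simp add: null_setsI)
  moreover have "{?t..} - {?t} = UNIV - {..?t}" by auto
  ultimately have "D.prob {?t..} = 1 - D.prob {..?t}"
    using measure_Diff_null_set[of "{?t..}" ?D "{?t}"] D.prob_compl[of "{..?t}"] by simp
  then show ?thesis using gamma_sum_atMost_mean[OF assms] by (simp add: abs_le_iff)
qed

lemma gamma_sum_tilt:
  assumes "k > 0" "\<theta> > 0" "r > 0" and A: "A \<in> sets borel"
    and beyond_mean: "\<And>x. x \<in> A \<Longrightarrow> 0 \<le> (r - 1) * (x - real n * (k * (r * \<theta>)))"
  shows "exp (real n * k * ((r - 1) - ln r)) * measure (conv_pow (gamma_law k \<theta>) n) A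
           \<le> measure (conv_pow (gamma_law k (r * \<theta>)) n) A"
proof (rule measure_conv_pow_tilt_ge)
  show "(\<integral>\<^sup>+x. g x \<partial>gamma_law k (r * \<theta>))
      = (\<integral>\<^sup>+x. g x * ennreal ((\<theta> / (r * \<theta>)) powr k * exp ((1 / \<theta> - 1 / (r * \<theta>)) * x)) \<partial>gamma_law k \<theta>)"
    if "g \<in> borel_measurable borel" for g
    by (rule nn_integral_gamma_law_rescale) (use assms that in auto)
  fix x assume "x \<in> A"
  \<comment> \<open>the tilting density, normalised at the mean \<open>n k r \<theta>\<close> of the tilted sum\<close>
  have "((\<theta> / (r * \<theta>)) powr k) ^ n * exp ((1 / \<theta> - 1 / (r * \<theta>)) * x)
      = exp (real n * k * ((r - 1) - ln r)) * exp ((r - 1) * (x - real n * (k * (r * \<theta>))) / (r * \<theta>))"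
  proof -
    have "((\<theta> / (r * \<theta>)) powr k) ^ n = exp (- (real n * k * ln r))"
      using assms by (simp add: powr_def ln_div exp_of_nat_mult[symmetric])
    moreover have "(1 / \<theta> - 1 / (r * \<theta>)) * x
        = real n * k * (r - 1) + (r - 1) * (x - real n * (k * (r * \<theta>))) / (r * \<theta>)"
      using assms by (simp add: field_simps)
    ultimately show ?thesis by (simp add: exp_add[symmetric] algebra_simps)
  qed
  moreover have "1 \<le> exp ((r - 1) * (x - real n * (k * (r * \<theta>))) / (r * \<theta>))"
    using beyond_mean[OF \<open>x \<in> A\<close>] assms by simp
  ultimately show "exp (real n * k * ((r - 1) - ln r)) \<le> ((\<theta> / (r * \<theta>)) powr k) ^ n * exp ((1 / \<theta> - 1 / (r * \<theta>)) * x)"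
    by simp
qed (use assms prob_space_gamma_law in auto)

lemma ln_one_plus_gap_le_ln_one_minus_gap:
  fixes e :: real
  assumes "0 < e" "e < 1"
  shows "e - ln (1 + e) \<le> - e - ln (1 - e)"
proof -
  let ?f = "\<lambda>x::real. ln (1 + x) - ln (1 - x) - 2 * x"
  have "?f 0 \<le> ?f e"
  proof (rule DERIV_nonneg_imp_nondecreasing[of 0 e ?f])
    fix x assume x: "0 \<le> x" "x \<le> e"
    then have "(?f has_real_derivative (1 / (1 + x) + 1 / (1 - x) - 2)) (at x)"
      using assms by (auto intro!: derivative_eq_intros)
    moreover have "(1 + x) * (1 - x) > 0" using x assms by simp
    then have "1 / (1 + x) + 1 / (1 - x) - 2 = 2 * x ^ 2 / ((1 + x) * (1 - x))"
      using x assms by (simp add: field_simps power2_eq_square)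
    moreover have "2 * x ^ 2 / ((1 + x) * (1 - x)) \<ge> 0" using x assms by simp
    ultimately show "\<exists>y. (?f has_real_derivative y) (at x) \<and> 0 \<le> y" by auto
  qed (use assms in simp)
  then show ?thesis by simp
qed

lemma gamma_sum_upper_tail:
  assumes BE: "BE_constant C" and "k > 0" "\<theta> > 0" "\<epsilon> > 0" "n \<ge> 1"
  shows "exp (real n * (k * (\<epsilon> - ln (1 + \<epsilon>))))
           * measure (conv_pow (gamma_law k \<theta>) n) {real n * (k * ((1 + \<epsilon>) * \<theta>))..}
         \<le> 1 / 2 + C / sqrt n * sqrt (3 + 6 / k)"
proof -
  have "exp (real n * (k * (\<epsilon> - ln (1 + \<epsilon>))))
           * measure (conv_pow (gamma_law k \<theta>) n) {real n * (k * ((1 + \<epsilon>) * \<theta>))..}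
      \<le> measure (conv_pow (gamma_law k ((1 + \<epsilon>) * \<theta>)) n) {real n * (k * ((1 + \<epsilon>) * \<theta>))..}"
    using gamma_sum_tilt[of k \<theta> "1 + \<epsilon>" "{real n * (k * ((1 + \<epsilon>) * \<theta>))..}" n] assms
    by (simp add: mult.assoc)
  also have "\<dots> \<le> 1 / 2 + C / sqrt n * sqrt (3 + 6 / k)"
    by (rule gamma_sum_atLeast_mean) (use assms in simp_all)
  finally show ?thesis .
qed

lemma gamma_sum_lower_tail:
  assumes BE: "BE_constant C" and "k > 0" "\<theta> > 0" "\<epsilon> > 0" "n \<ge> 1"
  shows "exp (real n * (k * (\<epsilon> - ln (1 + \<epsilon>))))
           * measure (conv_pow (gamma_law k \<theta>) n) {..real n * (k * ((1 - \<epsilon>) * \<theta>))}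
         \<le> 1 / 2 + C / sqrt n * sqrt (3 + 6 / k)"
proof (cases "\<epsilon> < 1")
  case True
  let ?P = "measure (conv_pow (gamma_law k \<theta>) n) {..real n * (k * ((1 - \<epsilon>) * \<theta>))}"
  have "exp (real n * (k * (\<epsilon> - ln (1 + \<epsilon>)))) \<le> exp (real n * k * ((1 - \<epsilon> - 1) - ln (1 - \<epsilon>)))"
    using ln_one_plus_gap_le_ln_one_minus_gap[OF \<open>\<epsilon> > 0\<close> True] \<open>k > 0\<close>
    by (simp add: mult.assoc mult_left_mono)
  then have "exp (real n * (k * (\<epsilon> - ln (1 + \<epsilon>)))) * ?P \<le> exp (real n * k * ((1 - \<epsilon> - 1) - ln (1 - \<epsilon>))) * ?P"
    by (rule mult_right_mono) simp
  also have "\<dots> \<le> measure (conv_pow (gamma_law k ((1 - \<epsilon>) * \<theta>)) n) {..real n * (k * ((1 - \<epsilon>) * \<theta>))}"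
    by (rule gamma_sum_tilt) (use assms True in \<open>auto intro: mult_nonneg_nonpos\<close>)
  also have "\<dots> \<le> 1 / 2 + C / sqrt n * sqrt (3 + 6 / k)"
    using gamma_sum_atMost_mean[OF BE \<open>k > 0\<close>, of "(1 - \<epsilon>) * \<theta>" n] assms True by (simp add: abs_le_iff)
  finally show ?thesis .
next
  case False
  then have "real n * (k * ((1 - \<epsilon>) * \<theta>)) \<le> 0"
    using assms by (simp add: mult_nonneg_nonpos mult_nonpos_nonneg)
  moreover obtain m where "n = Suc m" using \<open>n \<ge> 1\<close> by (cases n) auto
  ultimately have "AE x in conv_pow (gamma_law k \<theta>) n. x \<notin> {..real n * (k * ((1 - \<epsilon>) * \<theta>))}"
    using AE_conv_pow_pos[OF prob_space_gamma_law sets_gamma_law AE_gamma_law_pos, of k \<theta> m] assms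
    by (auto elim: eventually_mono)
  then have "measure (conv_pow (gamma_law k \<theta>) n) {..real n * (k * ((1 - \<epsilon>) * \<theta>))} = 0"
    by (simp add: AE_iff_measurable[OF _ refl] measure_def atMost_def)
  moreover have "0 \<le> C / sqrt n * sqrt (3 + 6 / k)"
    using BE_constant_nonneg[OF BE] \<open>k > 0\<close> by simp
  ultimately show ?thesis by simp
qed

lemma gamma_sum_concentration:
  assumes BE: "BE_constant C" and "k > 0" "\<theta> > 0" "\<epsilon> > 0" "n \<ge> 1"
  shows "1 - exp (- (real n * (k * (\<epsilon> - ln (1 + \<epsilon>))))) * (1 + 2 * C * sqrt (3 + 6 / k) / sqrt n)
    \<le> measure (conv_pow (gamma_law k \<theta>) n)
         {real n * (k * ((1 - \<epsilon>) * \<theta>))<..<real n * (k * ((1 + \<epsilon>) * \<theta>))}"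
proof -
  let ?D = "conv_pow (gamma_law k \<theta>) n"
  let ?l = "real n * (k * ((1 - \<epsilon>) * \<theta>))" and ?u = "real n * (k * ((1 + \<epsilon>) * \<theta>))"
  define E where "E = exp (real n * (k * (\<epsilon> - ln (1 + \<epsilon>))))"
  interpret D: prob_space ?D by (rule prob_space_conv_pow[OF prob_space_gamma_law[OF assms(2,3)]]) simp
  have "UNIV = {..?l} \<union> {?l<..<?u} \<union> {?u..}" by auto
  then have cover: "1 \<le> D.prob {..?l} + D.prob {?l<..<?u} + D.prob {?u..}"
    using D.prob_space measure_Un_le[of "{..?l} \<union> {?l<..<?u}" ?D "{?u..}"]
      measure_Un_le[of "{..?l}" ?D "{?l<..<?u}"] by simp
  have "E * (D.prob {..?l} + D.prob {?u..}) \<le> 1 + 2 * C * sqrt (3 + 6 / k) / sqrt n"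
    using gamma_sum_lower_tail[OF assms] gamma_sum_upper_tail[OF assms] unfolding E_def
    by (simp add: distrib_left)
  then have "D.prob {..?l} + D.prob {?u..} \<le> (1 + 2 * C * sqrt (3 + 6 / k) / sqrt n) / E"
    by (simp add: E_def pos_le_divide_eq mult.commute)
  also have "\<dots> = exp (- (real n * (k * (\<epsilon> - ln (1 + \<epsilon>))))) * (1 + 2 * C * sqrt (3 + 6 / k) / sqrt n)"
    by (simp add: E_def exp_minus divide_inverse mult.commute)
  finally show ?thesis using cover by simp
qed

lemma sample_size_condition:
  fixes C k c \<delta> :: real and n :: nat
  assumes "C \<ge> 0" "k > 0" "c > 0" "0 < \<delta>" "\<delta> < 1"
    and n: "real n > ln ((1 + 2 * C * (3 + 6 / k) powr (3/4) * sqrt (k * c / ln (1 / \<delta>))) / \<delta>) / (k * c)"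
  shows "n \<ge> 1" and "exp (- (real n * (k * c))) * (1 + 2 * C * sqrt (3 + 6 / k) / sqrt n) < \<delta>"
proof -
  define L where "L = ln (1 / \<delta>)"
  define \<zeta> where "\<zeta> = 2 * C * (3 + 6 / k) powr (3/4) * sqrt (k * c / L)"
  have "L > 0" using assms by (simp add: L_def)
  then have "\<zeta> \<ge> 0" using assms by (simp add: \<zeta>_def)
  have large: "real n * (k * c) > ln ((1 + \<zeta>) / \<delta>)"
    using n assms by (simp add: \<zeta>_def L_def pos_divide_less_eq)
  moreover have "ln ((1 + \<zeta>) / \<delta>) = ln (1 + \<zeta>) + L"
    using \<open>\<zeta> \<ge> 0\<close> assms by (simp add: L_def ln_div)
  moreover have "ln (1 + \<zeta>) \<ge> 0" using \<open>\<zeta> \<ge> 0\<close> by simp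
  ultimately have "real n * (k * c) > L" by linarith
  then show "n \<ge> 1" using \<open>L > 0\<close> by (cases n) auto
  have "1 / real n \<le> k * c / L"
    using \<open>real n * (k * c) > L\<close> \<open>L > 0\<close> \<open>n \<ge> 1\<close> by (simp add: field_simps)
  then have "1 / sqrt n \<le> sqrt (k * c / L)"
    by (metis real_sqrt_divide real_sqrt_le_mono real_sqrt_one)
  moreover have "sqrt (3 + 6 / k) \<le> (3 + 6 / k) powr (3/4)"
    using \<open>k > 0\<close> by (subst powr_half_sqrt[symmetric]) (auto intro: powr_mono)
  ultimately have "2 * C * sqrt (3 + 6 / k) * (1 / sqrt n) \<le> 2 * C * (3 + 6 / k) powr (3/4) * sqrt (k * c / L)"
    using \<open>C \<ge> 0\<close> by (intro mult_mono mult_left_mono) auto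
  then have "1 + 2 * C * sqrt (3 + 6 / k) / sqrt n \<le> 1 + \<zeta>" by (simp add: \<zeta>_def)
  also have "1 + \<zeta> < \<delta> * exp (real n * (k * c))"
  proof -
    have "(1 + \<zeta>) / \<delta> = exp (ln ((1 + \<zeta>) / \<delta>))" using \<open>\<zeta> \<ge> 0\<close> \<open>\<delta> > 0\<close> by simp
    also have "\<dots> < exp (real n * (k * c))" using large by simp
    finally show ?thesis using \<open>\<delta> > 0\<close> by (simp add: divide_less_eq mult.commute)
  qed
  finally show "exp (- (real n * (k * c))) * (1 + 2 * C * sqrt (3 + 6 / k) / sqrt n) < \<delta>"
    by (simp add: exp_minus field_simps)
qed

lemma abs_mean_deviation_iff:
  fixes s q k \<theta> \<epsilon> :: real
  assumes "k * q > 0"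
  shows "\<bar>s / (k * q) - \<theta>\<bar> < \<epsilon> * \<theta> \<longleftrightarrow> s \<in> {q * (k * ((1 - \<epsilon>) * \<theta>))<..<q * (k * ((1 + \<epsilon>) * \<theta>))}"
proof -
  have "\<bar>s / (k * q) - \<theta>\<bar> < \<epsilon> * \<theta> \<longleftrightarrow> \<theta> - \<epsilon> * \<theta> < s / (k * q) \<and> s / (k * q) < \<theta> + \<epsilon> * \<theta>"
    by (auto simp: abs_less_iff)
  also have "\<dots> \<longleftrightarrow> (\<theta> - \<epsilon> * \<theta>) * (k * q) < s \<and> s < (\<theta> + \<epsilon> * \<theta>) * (k * q)"
    using assms by (simp add: less_divide_eq divide_less_eq)
  finally show ?thesis by (simp add: algebra_simps)
qed

theorem theorem6:
  fixes M :: "'a measure" and X :: "nat \<Rightarrow> 'a \<Rightarrow> real"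
    and k \<theta> \<epsilon> \<delta> C :: real and n :: nat
  assumes "prob_space M"
    and "BE_constant C"
    and "k > 0" and "\<theta> > 0"
    and "prob_space.indep_vars M (\<lambda>_. borel) X {0..<n}"
    and "\<And>i. i < n \<Longrightarrow> distributed M lborel (X i) (gamma_density k \<theta>)"
    and "\<epsilon> > 0" and "0 < \<delta>" and "\<delta> < 1"
    and "real n > ln ((1 + 2 * C * (3 + 6 / k) powr (3/4)
                        * sqrt (k * (\<epsilon> - ln (1 + \<epsilon>)) / ln (1 / \<delta>))) / \<delta>)
                  / (k * (\<epsilon> - ln (1 + \<epsilon>)))"
  shows "measure M {\<omega> \<in> space M.
           \<bar>(\<Sum>i<n. X i \<omega>) / (k * real n) - \<theta>\<bar> < \<epsilon> * \<theta>} > 1 - \<delta>"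
proof -
  interpret M: prob_space M by fact
  have "\<epsilon> - ln (1 + \<epsilon>) > 0" using ln_add_one_self_less_self[OF \<open>\<epsilon> > 0\<close>] by simp
  note sample_size = sample_size_condition[OF BE_constant_nonneg[OF \<open>BE_constant C\<close>] \<open>k > 0\<close> this
      \<open>0 < \<delta>\<close> \<open>\<delta> < 1\<close> assms(10)]
  let ?S = "\<lambda>\<omega>. \<Sum>i<n. X i \<omega>"
  have "distr M borel (X i) = gamma_law k \<theta>" if "i < n" for i
    using assms(6)[OF that] by (simp add: distributed_def gamma_law_def cong: distr_cong)
  then have law: "distr M borel ?S = conv_pow (gamma_law k \<theta>) n"
    by (rule M.distr_sum_indep_eq_conv_pow[OF assms(5)])
  have "\<forall>i\<in>{0..<n}. X i \<in> borel_measurable M"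
    using assms(5) unfolding M.indep_vars_def by (rule conjunct1)
  then have "?S \<in> borel_measurable M" by (intro borel_measurable_sum) auto
  moreover have "k * real n > 0" using \<open>k > 0\<close> sample_size(1) by simp
  ultimately have "measure M {\<omega> \<in> space M. \<bar>?S \<omega> / (k * real n) - \<theta>\<bar> < \<epsilon> * \<theta>}
      = measure (distr M borel ?S) {real n * (k * ((1 - \<epsilon>) * \<theta>))<..<real n * (k * ((1 + \<epsilon>) * \<theta>))}"
    by (simp add: measure_distr abs_mean_deviation_iff vimage_def Int_def conj_commute)
  also have "\<dots> > 1 - \<delta>"
    using gamma_sum_concentration[OF assms(2-4,7) sample_size(1)] sample_size(2) law by simp
  finally show ?thesis .
qed

end
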